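(* Let $P$ be a $k\times k$ permutation matrix and let $m$ and $n$ be relatively prime positive integers. Then there are diagonal integer matrices $D_1$ and $D_2$ of size $k\times k$ satisfying $\gcd(\det(D_1), m) = 1$, $\gcd(\det(D_2), n) = 1$, and $\det(nD_1 + mD_2P) = 1$. *)

theory Defs
  imports "HOL-Analysis.Analysis"
begin

definition perm_matrix :: "('a::{zero,one}) ^'k^'k \<Rightarrow> bool" where
  "perm_matrix P \<longleftrightarrow> (\<exists>p. p permutes (UNIV :: 'k set) \<and>
      P = (\<chi> i j. if p i = j then 1 else 0))"

definition diag_matrix :: "('a::zero) ^'k^'k \<Rightarrow> bool" where
  "diag_matrix D \<longleftrightarrow> (\<forall>i j. i \<noteq> j \<longrightarrow> D $ i $ j = 0)"

end

theory Submission
  imports Defs "HOL-Combinatorics.Orbits"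
begin

text \<open>
  Write \<open>D\<^sub>1 = diag a\<close>, \<open>D\<^sub>2 = diag b\<close> and let \<open>p\<close> be the permutation of \<open>P\<close>. Row \<open>i\<close> of
  \<open>n D\<^sub>1 + m D\<^sub>2 P\<close> has the entry \<open>n a\<^sub>i\<close> in column \<open>i\<close> and \<open>m b\<^sub>i\<close> in column \<open>p i\<close>, so the rows
  belonging to a cycle \<open>C\<close> of \<open>p\<close> only meet the columns of \<open>C\<close>, and the determinant is the product
  over the cycles of the determinants of these blocks. In the Leibniz expansion of a block only the
  identity and the cycle itself survive, so the block has determinant
  \<open>n\<^bsup>|C|\<^esup> \<Prod>\<^sub>C a + \<plusminus>m\<^bsup>|C|\<^esup> \<Prod>\<^sub>C b\<close>. As \<open>n\<^bsup>|C|\<^esup>\<close> and \<open>m\<^bsup>|C|\<^esup>\<close> are coprime, Bezout gives \<open>x\<close>, \<open>y\<close>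
  making this \<open>1\<close> when \<open>a\<close>, \<open>b\<close> are \<open>x\<close>, \<open>y\<close> at one point of \<open>C\<close> and \<open>1\<close> elsewhere; the Bezout
  relation itself forces \<open>x\<close> to be prime to \<open>m\<close> and \<open>y\<close> to \<open>n\<close>.
\<close>

definition rows_on :: "'k set \<Rightarrow> 'a::{zero,one}^'k^'k \<Rightarrow> 'a^'k^'k" where
  "rows_on S A = (\<chi> i j. if i \<in> S then A $ i $ j else if i = j then 1 else 0)"

definition diag_plus_perm :: "('k \<Rightarrow> 'a::monoid_add) \<Rightarrow> ('k \<Rightarrow> 'a) \<Rightarrow> ('k \<Rightarrow> 'k) \<Rightarrow> 'a^'k^'k" where
  "diag_plus_perm u v p = (\<chi> i j. (if i = j then u i else 0) + (if p i = j then v i else 0))"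

lemma rows_on_UNIV [simp]: "rows_on UNIV A = A"
  by (simp add: rows_on_def vec_eq_iff)

lemma rows_on_empty [simp]: "rows_on {} A = mat 1"
  by (simp add: rows_on_def mat_def vec_eq_iff)

lemma rows_on_cong: "(\<And>i. i \<in> S \<Longrightarrow> A $ i = B $ i) \<Longrightarrow> rows_on S A = rows_on S B"
  by (simp add: rows_on_def vec_eq_iff)

lemma rows_on_Un_mult:
  fixes A :: "'a::semiring_1^'k::finite^'k"
  assumes "C \<inter> S = {}" and "\<And>i j. i \<in> C \<Longrightarrow> A $ i $ j \<noteq> 0 \<Longrightarrow> j \<notin> S"
  shows "rows_on (C \<union> S) A = rows_on C A ** rows_on S A"
proof -
  have "(rows_on C A ** rows_on S A) $ i $ j = rows_on (C \<union> S) A $ i $ j" for i j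
  proof (cases "i \<in> C")
    case True
    have "rows_on C A $ i $ k * rows_on S A $ k $ j = (if k = j then A $ i $ j else 0)" for k
      using True assms by (cases "A $ i $ k = 0") (auto simp: rows_on_def)
    then show ?thesis
      using True by (simp add: matrix_matrix_mult_def rows_on_def)
  next
    case False
    then have "rows_on C A $ i $ k * rows_on S A $ k $ j = (if k = i then rows_on S A $ i $ j else 0)" for k
      by (simp add: rows_on_def)
    then show ?thesis
      using False by (simp add: matrix_matrix_mult_def rows_on_def)
  qed
  then show ?thesis by (simp add: vec_eq_iff)
qed

lemma diag_plus_perm_nonzero:
  "diag_plus_perm u v p $ i $ j \<noteq> 0 \<Longrightarrow> j = i \<or> j = p i"
  by (auto simp: diag_plus_perm_def split: if_splits)

lemma det_rows_on_Un_diag_plus_perm: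
  fixes u v :: "'k::finite \<Rightarrow> 'a::comm_ring_1"
  assumes "p ` C \<subseteq> C" and "C \<inter> S = {}"
  shows "det (rows_on (C \<union> S) (diag_plus_perm u v p))
           = det (rows_on C (diag_plus_perm u v p)) * det (rows_on S (diag_plus_perm u v p))"
proof -
  have "rows_on (C \<union> S) (diag_plus_perm u v p) = rows_on C (diag_plus_perm u v p) ** rows_on S (diag_plus_perm u v p)"
    using assms diag_plus_perm_nonzero by (intro rows_on_Un_mult) blast+
  then show ?thesis by (simp add: det_mul)
qed

definition diag_vec :: "('k \<Rightarrow> 'a::zero) \<Rightarrow> 'a^'k^'k" where
  "diag_vec a = (\<chi> i j. if i = j then a i else 0)"

lemma diag_vec_mult_nth: "(diag_vec a ** B) $ i $ j = a i * B $ i $ j"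
proof -
  have "(diag_vec a ** B) $ i $ j = (\<Sum>k\<in>UNIV. (if i = k then a i else 0) * B $ k $ j)"
    by (simp add: matrix_matrix_mult_def diag_vec_def)
  also have "\<dots> = (\<Sum>k\<in>UNIV. if k = i then a i * B $ i $ j else 0)"
    by (rule sum.cong) auto
  finally show ?thesis by simp
qed

lemma mat_eq_diag_vec: "mat c = diag_vec (\<lambda>_. c)"
  by (simp add: mat_def diag_vec_def)

lemma mat_mult_diag_vec: "mat c ** diag_vec a = diag_vec (\<lambda>i. c * a i)"
  by (simp add: vec_eq_iff mat_eq_diag_vec diag_vec_mult_nth) (simp add: diag_vec_def)

lemma diag_vec_add_diag_vec_mult_perm_matrix:
  "diag_vec u + diag_vec v ** (\<chi> i j. if p i = j then 1 else 0) = diag_plus_perm u v p"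
  by (simp add: vec_eq_iff diag_vec_mult_nth) (simp add: diag_vec_def diag_plus_perm_def)

lemma diag_matrix_diag_vec: "diag_matrix (diag_vec a)"
  by (simp add: diag_matrix_def diag_vec_def)

lemma det_diag_vec: "det (diag_vec a :: 'a::comm_ring_1^'k::finite^'k) = (\<Prod>i\<in>UNIV. a i)"
  by (simp add: det_diagonal diag_vec_def)

lemma orbit_preimage:
  assumes "permutation p" and "p y \<in> orbit p c"
  shows "y \<in> orbit p c"
proof -
  have "orbit p c = orbit p (p y)"
    using assms by (intro orbit_cyclic_eq3[symmetric] cyclic_on_orbit')
  also have "\<dots> = orbit p y"
    using assms(1) by (rule permutation_orbit_step)
  finally show ?thesis
    using assms(1) by (simp add: permutation_self_in_orbit)
qed

lemma orbit_subset_invariant: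
  assumes "p ` S \<subseteq> S" and "c \<in> S"
  shows "orbit p c \<subseteq> S"
proof
  fix y assume "y \<in> orbit p c"
  then show "y \<in> S" using assms by induction auto
qed

lemma perm_restrict_cycle_permutes:
  fixes p :: "'k::finite \<Rightarrow> 'k"
  assumes "p permutes UNIV" and "cyclic_on p C"
  shows "perm_restrict p C permutes UNIV"
proof -
  have closed: "p i \<in> C \<longleftrightarrow> i \<in> C" for i
    using cyclic_on_inI[OF assms(2)] cyclic_on_f_in[OF assms] by blast
  have "inj (perm_restrict p C)"
  proof (rule injI)
    fix x y assume "perm_restrict p C x = perm_restrict p C y"
    then show "x = y"
      using permutes_inj[OF assms(1)] closed[of x] closed[of y]
      by (cases "x \<in> C"; cases "y \<in> C") (auto simp: perm_restrict_def dest: injD)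
  qed
  then show ?thesis by (rule inj_imp_permutes) simp_all
qed

lemma id_or_perm_restrict_cycle:
  assumes "inj \<sigma>" and "cyclic_on p C" and steps: "\<And>i. \<sigma> i = i \<or> (i \<in> C \<and> \<sigma> i = p i)"
  shows "\<sigma> = id \<or> \<sigma> = perm_restrict p C"
proof (cases "\<sigma> = id")
  case False
  then obtain z where "\<sigma> z \<noteq> z" by (auto simp: fun_eq_iff)
  with steps have "z \<in> C" and "\<sigma> z = p z" by auto
  have propagate: "\<sigma> (p i) = p (p i)" if "\<sigma> i = p i" for i
  proof (cases "\<sigma> (p i) = p i")
    case True
    then have "p i = i" using that \<open>inj \<sigma>\<close> by (metis injD)
    then show ?thesis using that by simp
  qed (use steps in blast)
  have "\<sigma> y = p y" if "y \<in> orbit p z" for y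
    using that by induction (use \<open>\<sigma> z = p z\<close> propagate in auto)
  moreover have "orbit p z = C"
    using assms(2) \<open>z \<in> C\<close> by (rule orbit_cyclic_eq3)
  ultimately have "\<sigma> = perm_restrict p C"
    using steps by (auto simp: fun_eq_iff perm_restrict_def)
  then show ?thesis ..
qed simp

lemma det_rows_on_fixpoint:
  fixes u v :: "'k::finite \<Rightarrow> 'a::comm_ring_1"
  assumes "p c = c"
  shows "det (rows_on {c} (diag_plus_perm u v p)) = u c + v c"
proof -
  let ?M = "rows_on {c} (diag_plus_perm u v p)"
  have "det ?M = (\<Prod>i\<in>UNIV. ?M $ i $ i)"
    by (rule det_diagonal) (simp add: rows_on_def diag_plus_perm_def assms)
  also have "\<dots> = (\<Prod>i\<in>UNIV. if i = c then u c + v c else 1)"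
    by (rule prod.cong) (simp_all add: rows_on_def diag_plus_perm_def assms)
  finally show ?thesis by simp
qed

lemma det_rows_on_fixpoint_free_cycle:
  fixes u v :: "'k::finite \<Rightarrow> 'a::comm_ring_1"
  assumes "p permutes UNIV" and cyc: "cyclic_on p C" and no_fix: "\<And>i. i \<in> C \<Longrightarrow> p i \<noteq> i"
  shows "det (rows_on C (diag_plus_perm u v p))
           = (\<Prod>i\<in>C. u i) + of_int (sign (perm_restrict p C)) * (\<Prod>i\<in>C. v i)"
proof -
  let ?M = "rows_on C (diag_plus_perm u v p)"
  let ?q = "perm_restrict p C"
  have perm_q: "?q permutes UNIV"
    using \<open>p permutes UNIV\<close> cyc by (rule perm_restrict_cycle_permutes)
  obtain c where "c \<in> C" using cyc by (auto simp: cyclic_on_def)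
  then have "?q \<noteq> id"
    using no_fix by (auto simp: perm_restrict_def fun_eq_iff)
  have contributing: "\<sigma> = id \<or> \<sigma> = ?q"
    if "\<sigma> permutes UNIV" and "(\<Prod>i\<in>UNIV. ?M $ i $ \<sigma> i) \<noteq> 0" for \<sigma>
  proof (rule id_or_perm_restrict_cycle[OF permutes_inj[OF that(1)] cyc])
    fix i
    have "?M $ i $ \<sigma> i \<noteq> 0" using that(2) prod_zero[of UNIV "\<lambda>i. ?M $ i $ \<sigma> i"] by auto
    then show "\<sigma> i = i \<or> (i \<in> C \<and> \<sigma> i = p i)"
      by (auto simp: rows_on_def diag_plus_perm_def split: if_splits)
  qed
  have "det ?M = (\<Sum>\<sigma>\<in>{id, ?q}. of_int (sign \<sigma>) * (\<Prod>i\<in>UNIV. ?M $ i $ \<sigma> i))"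
    unfolding det_def
    by (rule sum.mono_neutral_right) (use contributing perm_q permutes_id in \<open>auto dest: mult_not_zero\<close>)
  also have "\<dots> = (\<Prod>i\<in>UNIV. ?M $ i $ i) + of_int (sign ?q) * (\<Prod>i\<in>UNIV. ?M $ i $ ?q i)"
    using \<open>?q \<noteq> id\<close> by simp
  also have "(\<Prod>i\<in>UNIV. ?M $ i $ i) = (\<Prod>i\<in>C. u i)"
  proof -
    have "?M $ i $ i = (if i \<in> C then u i else 1)" for i
      using no_fix[of i] by (auto simp: rows_on_def diag_plus_perm_def)
    then show ?thesis by (simp add: prod.If_cases)
  qed
  also have "(\<Prod>i\<in>UNIV. ?M $ i $ ?q i) = (\<Prod>i\<in>C. v i)"
  proof -
    have "?M $ i $ ?q i = (if i \<in> C then v i else 1)" for i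
      using no_fix[of i] by (auto simp: rows_on_def diag_plus_perm_def perm_restrict_def)
    then show ?thesis by (simp add: prod.If_cases)
  qed
  finally show ?thesis .
qed

lemma det_rows_on_cycle:
  fixes u v :: "'k::finite \<Rightarrow> 'a::comm_ring_1"
  assumes "p permutes UNIV" and cyc: "cyclic_on p C"
  shows "det (rows_on C (diag_plus_perm u v p))
           = (\<Prod>i\<in>C. u i) + of_int (sign (perm_restrict p C)) * (\<Prod>i\<in>C. v i)"
proof (cases "\<exists>c\<in>C. p c = c")
  case True
  then obtain c where "c \<in> C" and "p c = c" by blast
  then have "C = {c}"
    using orbit_eq_singleton_iff[of p c] orbit_cyclic_eq3[OF cyc] by simp
  moreover have "perm_restrict p {c} = id"
    using \<open>p c = c\<close> by (auto simp: perm_restrict_def)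
  ultimately show ?thesis
    using det_rows_on_fixpoint[of p c u v] \<open>p c = c\<close> by simp
next
  case False
  then show ?thesis
    using det_rows_on_fixpoint_free_cycle[OF assms] by blast
qed

lemma coprime_of_linear_combination:
  fixes a b x y :: int
  assumes "a * x + b * y = 1"
  shows "coprime x b"
proof (rule coprimeI)
  fix c assume "c dvd x" "c dvd b"
  then have "c dvd a * x + b * y" by simp
  then show "is_unit c" using assms by simp
qed

lemma bezout_powers_coprime:
  fixes m n s :: int
  assumes "coprime m n" and "is_unit s" and "L > 0"
  shows "\<exists>x y. coprime x m \<and> coprime y n \<and> n ^ L * x + s * m ^ L * y = 1"
proof -
  have "coprime n s" using \<open>is_unit s\<close> by (rule is_unit_right_imp_coprime)
  then have "coprime (n ^ L) (s * m ^ L)"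
    using \<open>coprime m n\<close> by (simp add: coprime_commute)
  then obtain x y where xy: "x * n ^ L + y * (s * m ^ L) = 1"
    using bezout_int[of "n ^ L" "s * m ^ L"] by (auto simp: coprime_iff_gcd_eq_1)
  have "coprime x (m ^ L)"
    by (rule coprime_of_linear_combination[where a = "n ^ L" and y = "s * y"]) (use xy in \<open>simp add: algebra_simps\<close>)
  moreover have "coprime y (n ^ L)"
    by (rule coprime_of_linear_combination[where a = "s * m ^ L" and y = x]) (use xy in \<open>simp add: algebra_simps\<close>)
  ultimately show ?thesis
    using xy \<open>L > 0\<close> by (intro exI[of _ x] exI[of _ y]) (simp add: algebra_simps)
qed

lemma exists_unimodular_cycle_block:
  fixes p :: "'k::finite \<Rightarrow> 'k" and m n :: int
  assumes perm: "p permutes UNIV" and "coprime m n" and cyc: "cyclic_on p C"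
  shows "\<exists>a b. (\<forall>i. coprime (a i) m) \<and> (\<forall>i. coprime (b i) n) \<and>
           det (rows_on C (diag_plus_perm (\<lambda>i. n * a i) (\<lambda>i. m * b i) p)) = 1"
proof -
  obtain c where "c \<in> C" using cyc by (auto simp: cyclic_on_def)
  define s where "s = sign (perm_restrict p C)"
  have "is_unit s" by (cases "perm_restrict p C" rule: sign_cases) (simp_all add: s_def)
  moreover have "card C > 0" using \<open>c \<in> C\<close> by (auto simp: card_gt_0_iff)
  ultimately obtain x y where "coprime x m" "coprime y n"
    and xy: "n ^ card C * x + s * m ^ card C * y = 1"
    using bezout_powers_coprime \<open>coprime m n\<close> by blast
  define a where "a i = (if i = c then x else 1)" for i
  define b where "b i = (if i = c then y else 1)" for i
  have "(\<Prod>i\<in>C. n * a i) = n ^ card C * x" "(\<Prod>i\<in>C. m * b i) = m ^ card C * y"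
    using \<open>c \<in> C\<close> by (simp_all add: prod.distrib a_def b_def)
  then have "det (rows_on C (diag_plus_perm (\<lambda>i. n * a i) (\<lambda>i. m * b i) p)) = 1"
    using xy by (simp add: det_rows_on_cycle[OF perm cyc] s_def mult.assoc)
  moreover have "\<forall>i. coprime (a i) m" "\<forall>i. coprime (b i) n"
    using \<open>coprime x m\<close> \<open>coprime y n\<close> by (simp_all add: a_def b_def)
  ultimately show ?thesis by blast
qed

lemma exists_unimodular_rows_on:
  fixes p :: "'k::finite \<Rightarrow> 'k" and m n :: int
  assumes perm: "p permutes UNIV" and "coprime m n" and "p ` S \<subseteq> S"
  shows "\<exists>a b. (\<forall>i. coprime (a i) m) \<and> (\<forall>i. coprime (b i) n) \<and>
           det (rows_on S (diag_plus_perm (\<lambda>i. n * a i) (\<lambda>i. m * b i) p)) = 1"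
proof -
  have "finite S" by simp
  then show ?thesis using \<open>p ` S \<subseteq> S\<close>
  proof (induction S rule: finite_psubset_induct)
    case (psubset S)
    show ?case
    proof (cases "S = {}")
      case True
      then show ?thesis by (intro exI[of _ "\<lambda>_. 1"]) simp
    next
      case False
      then obtain c where "c \<in> S" by auto
      have "permutation p" using perm by (simp add: permutes_imp_permutation)
      define C where "C = orbit p c"
      define S' where "S' = S - C"
      have cyc: "cyclic_on p C" by (simp add: C_def \<open>permutation p\<close> cyclic_on_orbit')
      have "c \<in> C" by (simp add: C_def \<open>permutation p\<close> permutation_self_in_orbit)
      have "S = C \<union> S'"
        using orbit_subset_invariant[OF psubset.prems \<open>c \<in> S\<close>] by (auto simp: S'_def C_def)
      have "S' \<subset> S" using \<open>c \<in> C\<close> \<open>c \<in> S\<close> by (auto simp: S'_def)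
      moreover have "p ` S' \<subseteq> S'"
        using psubset.prems orbit_preimage[OF \<open>permutation p\<close>, of _ c] unfolding S'_def C_def by blast
      ultimately have "\<exists>a b. (\<forall>i. coprime (a i) m) \<and> (\<forall>i. coprime (b i) n) \<and>
          det (rows_on S' (diag_plus_perm (\<lambda>i. n * a i) (\<lambda>i. m * b i) p)) = 1"
        by (rule psubset.IH)
      then obtain a' b' where a': "\<forall>i. coprime (a' i) m" and b': "\<forall>i. coprime (b' i) n"
        and det': "det (rows_on S' (diag_plus_perm (\<lambda>i. n * a' i) (\<lambda>i. m * b' i) p)) = 1"
        by blast
      obtain a'' b'' where a'': "\<forall>i. coprime (a'' i) m" and b'': "\<forall>i. coprime (b'' i) n"
        and det'': "det (rows_on C (diag_plus_perm (\<lambda>i. n * a'' i) (\<lambda>i. m * b'' i) p)) = 1"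
        using exists_unimodular_cycle_block[OF perm \<open>coprime m n\<close> cyc] by blast
      define a where "a i = (if i \<in> C then a'' i else a' i)" for i
      define b where "b i = (if i \<in> C then b'' i else b' i)" for i
      let ?M = "diag_plus_perm (\<lambda>i. n * a i) (\<lambda>i. m * b i) p"
      have "det (rows_on (C \<union> S') ?M) = det (rows_on C ?M) * det (rows_on S' ?M)"
        using cyclic_on_inI[OF cyc] by (intro det_rows_on_Un_diag_plus_perm) (auto simp: S'_def)
      moreover have "rows_on C ?M = rows_on C (diag_plus_perm (\<lambda>i. n * a'' i) (\<lambda>i. m * b'' i) p)"
        by (rule rows_on_cong) (simp add: diag_plus_perm_def a_def b_def)
      moreover have "rows_on S' ?M = rows_on S' (diag_plus_perm (\<lambda>i. n * a' i) (\<lambda>i. m * b' i) p)"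
        by (rule rows_on_cong) (simp add: diag_plus_perm_def a_def b_def S'_def)
      moreover have "\<forall>i. coprime (a i) m" "\<forall>i. coprime (b i) n"
        using a' b' a'' b'' by (simp_all add: a_def b_def)
      ultimately show ?thesis
        using det' det'' \<open>S = C \<union> S'\<close> by (intro exI[of _ a] exI[of _ b]) simp
    qed
  qed
qed

theorem lemma3p5:
  fixes P :: "int ^'k^'k" and m n :: int
  assumes "perm_matrix P"
    and "m > 0" and "n > 0" and "coprime m n"
  shows "\<exists>D1 D2 :: int ^'k^'k. diag_matrix D1 \<and> diag_matrix D2 \<and>
           gcd (det D1) m = 1 \<and> gcd (det D2) n = 1 \<and>
           det (mat n ** D1 + mat m ** D2 ** P) = 1"
proof -
  obtain p where perm: "p permutes (UNIV :: 'k set)" and P: "P = (\<chi> i j. if p i = j then 1 else 0)"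
    using assms(1) unfolding perm_matrix_def by blast
  obtain a b where a: "\<forall>i. coprime (a i) m" and b: "\<forall>i. coprime (b i) n"
    and det: "det (diag_plus_perm (\<lambda>i. n * a i) (\<lambda>i. m * b i) p) = 1"
    using exists_unimodular_rows_on[OF perm \<open>coprime m n\<close>, of UNIV] by auto
  have "mat n ** diag_vec a + mat m ** diag_vec b ** P = diag_plus_perm (\<lambda>i. n * a i) (\<lambda>i. m * b i) p"
    by (simp add: P mat_mult_diag_vec diag_vec_add_diag_vec_mult_perm_matrix)
  moreover have "gcd (det (diag_vec a)) m = 1"
    using a unfolding det_diag_vec by (simp add: prod_coprime_left flip: coprime_iff_gcd_eq_1)
  moreover have "gcd (det (diag_vec b)) n = 1"
    using b unfolding det_diag_vec by (simp add: prod_coprime_left flip: coprime_iff_gcd_eq_1)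
  ultimately show ?thesis
    using det by (intro exI[of _ "diag_vec a"] exI[of _ "diag_vec b"]) (simp add: diag_matrix_diag_vec)
qed

end
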